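(* Fix integers $d\ge 1$ and $n\ge 1$. There exists a bijection $\phi_d:\mathcal{H}_n\to\mathcal{H}_n$ such that $\mathrm{dif}_d(\lambda)\ge\mathrm{mod}'_d(\phi_d(\lambda))$ for every $\lambda\in\mathcal{H}_n$. Moreover, for every $\lambda\in\mathcal{H}_n$, $\mathrm{dif}_d(\lambda)=0$ if and only if $\mathrm{mod}'_d(\phi_d(\lambda))=0$.
   Context: A partition is a finite nonempty weakly decreasing sequence $\lambda=(\lambda_1,\ldots,\lambda_k)$ of positive integers; $\ell(\lambda)=k$. The perimeter is $\Gamma(\lambda)=\lambda_1+\ell(\lambda)-1$; $\mathcal{H}_n$ is the set of partitions with perimeter $n$. $\mathrm{dif}_d(\lambda)=|\{i:1\le i<\ell(\lambda),\ \lambda_i-\lambda_{i+1}<d\}|$ and $\mathrm{mod}'_d(\lambda)=|\{i:1\le i\le\ell(\lambda),\ \lambda_i\not\equiv 1\pmod{d+1}\}|$. *)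

theory Defs
  imports Main
begin

text \<open>A partition is a nonempty weakly decreasing finite list of positive integers.
  Entries are stored as a list; list index i (0-based) corresponds to part lambda_(i+1).\<close>

definition is_partition :: "nat list \<Rightarrow> bool" where
  "is_partition xs \<longleftrightarrow> xs \<noteq> [] \<and> sorted_wrt (\<ge>) xs \<and> (\<forall>x\<in>set xs. 0 < x)"

definition perimeter :: "nat list \<Rightarrow> nat" where
  "perimeter xs = hd xs + length xs - 1"

definition H :: "nat \<Rightarrow> nat list set" where
  "H n = {xs. is_partition xs \<and> perimeter xs = n}"

definition dif :: "nat \<Rightarrow> nat list \<Rightarrow> nat" where
  "dif d xs = card {i. i + 1 < length xs \<and> int (xs ! i) - int (xs ! (i + 1)) < int d}"

definition modp :: "nat \<Rightarrow> nat list \<Rightarrow> nat" where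
  "modp d xs = card {i. i < length xs \<and> xs ! i mod (d + 1) \<noteq> 1 mod (d + 1)}"

end

theory Submission
  imports Defs
begin

text \<open>A partition of perimeter \<open>n\<close> is encoded by a word \<open>w\<close> of \<open>n - 1\<close> letters: reading
  \<open>w @ [True]\<close> from left to right, each True produces a part equal to one plus the number
  of False letters before it. So a part is counted by \<open>mod'\<^sub>d\<close> iff the number of False
  letters before its True is not a multiple of \<open>d + 1\<close>, and a pair of consecutive parts is
  counted by \<open>dif\<^sub>d\<close> iff fewer than \<open>d\<close> False letters separate their True letters.

  The recoding flips exactly the letters read while the number of False letters read so far
  is a multiple of \<open>d + 1\<close>. Each such False becomes a True, and every True of \<open>w\<close> counted
  by \<open>mod'\<^sub>d\<close> is kept, with fewer than \<open>d\<close> False letters between it and the preceding True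
  of the recoded word; hence \<open>dif\<^sub>d\<close> of the recoded partition dominates \<open>mod'\<^sub>d\<close> of the
  original. If \<open>mod'\<^sub>d\<close> vanishes, the True letters of the recoded word are exactly the
  flipped False letters, which are at least \<open>d\<close> False letters apart, so \<open>dif\<^sub>d\<close> vanishes
  as well. The bijection \<open>\<phi>\<^sub>d\<close> is the inverse of the recoding, transported to partitions.\<close>

fun parts :: "nat \<Rightarrow> bool list \<Rightarrow> nat list" where
  "parts c [] = []"
| "parts c (False # w) = parts (Suc c) w"
| "parts c (True # w) = parts c w @ [Suc c]"

definition partition_of_word :: "bool list \<Rightarrow> nat list" where
  "partition_of_word w = parts 0 (w @ [True])"

fun word_of_parts :: "nat \<Rightarrow> nat list \<Rightarrow> bool list" where
  "word_of_parts c [] = []"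
| "word_of_parts c [y] = replicate (y - Suc c) False"
| "word_of_parts c (y # z # zs) = replicate (y - Suc c) False @ True # word_of_parts (y - 1) (z # zs)"

definition word_of_partition :: "nat list \<Rightarrow> bool list" where
  "word_of_partition p = word_of_parts 0 (rev p)"

lemma set_parts_gt: "x \<in> set (parts c w) \<Longrightarrow> c < x"
  by (induction c w rule: parts.induct) auto

lemma sorted_wrt_parts: "sorted_wrt (\<ge>) (parts c w)"
  by (induction c w rule: parts.induct) (auto simp: sorted_wrt_append dest: set_parts_gt)

lemma parts_snoc_True_ne_Nil: "parts c (w @ [True]) \<noteq> []"
  by (induction c w rule: parts.induct) auto

lemma perimeter_parts: "perimeter (parts c (w @ [True])) = Suc (c + length w)"
  by (induction c w rule: parts.induct) (auto simp: perimeter_def parts_snoc_True_ne_Nil)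

lemma partition_of_word_in_H: "partition_of_word w \<in> H (Suc (length w))"
  by (auto simp: H_def is_partition_def partition_of_word_def perimeter_parts
      sorted_wrt_parts parts_snoc_True_ne_Nil dest: set_parts_gt)

lemma parts_replicate_False: "parts c (replicate k False @ w) = parts (c + k) w"
  by (induction k arbitrary: c) auto

lemma parts_word_of_parts:
  "sorted ys \<Longrightarrow> ys \<noteq> [] \<Longrightarrow> \<forall>y\<in>set ys. c < y \<Longrightarrow>
    parts c (word_of_parts c ys @ [True]) = rev ys"
proof (induction c ys rule: word_of_parts.induct)
  case (3 c y z zs)
  then have "parts (y - 1) (word_of_parts (y - 1) (z # zs) @ [True]) = rev (z # zs)"
    by (intro "3.IH") auto
  then show ?case
    using "3.prems" by (simp add: parts_replicate_False)
qed (auto simp: parts_replicate_False)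

lemma word_of_parts_shift:
  assumes "ys \<noteq> []" "Suc c < hd ys"
  shows "word_of_parts c ys = False # word_of_parts (Suc c) ys"
proof -
  have "replicate (y - Suc c) False = False # replicate (y - Suc (Suc c)) False" if "Suc c < y" for y
    using that by (metis Suc_diff_Suc replicate_Suc)
  then show ?thesis
    using assms by (cases "(c, ys)" rule: word_of_parts.cases) auto
qed

lemma word_of_parts_parts: "word_of_parts c (rev (parts c (w @ [True]))) = w"
proof (induction c w rule: parts.induct)
  case (2 c w)
  have "Suc c < hd (rev (parts (Suc c) (w @ [True])))"
    by (metis hd_in_set set_parts_gt parts_snoc_True_ne_Nil rev_is_Nil_conv set_rev)
  then show ?case
    using 2 word_of_parts_shift parts_snoc_True_ne_Nil by (simp add: rev_is_Nil_conv)
next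
  case (3 c w)
  then show ?case
    using parts_snoc_True_ne_Nil[of c w] by (cases "rev (parts c (w @ [True]))") auto
qed simp

lemma word_of_partition_of_word: "word_of_partition (partition_of_word w) = w"
  by (simp add: word_of_partition_def partition_of_word_def word_of_parts_parts)

lemma partition_of_word_of_partition:
  "is_partition p \<Longrightarrow> partition_of_word (word_of_partition p) = p"
  by (simp add: word_of_partition_def partition_of_word_def is_partition_def
      parts_word_of_parts sorted_wrt_rev)

lemma length_word_of_partition:
  assumes "p \<in> H n"
  shows "Suc (length (word_of_partition p)) = n"
proof -
  have "p = partition_of_word (word_of_partition p)"
    using assms by (simp add: H_def partition_of_word_of_partition)
  then have "perimeter p = Suc (length (word_of_partition p))"
    by (metis partition_of_word_def perimeter_parts add_0)
  then show ?thesis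
    using assms by (simp add: H_def)
qed

lemma bij_betw_partition_of_word: "bij_betw partition_of_word {w. Suc (length w) = n} (H n)"
  using partition_of_word_in_H length_word_of_partition
  by (intro bij_betw_byWitness[where f' = word_of_partition])
    (auto simp: word_of_partition_of_word partition_of_word_of_partition H_def)

lemma bij_betw_word_of_partition: "bij_betw word_of_partition (H n) {w. Suc (length w) = n}"
  using partition_of_word_in_H length_word_of_partition
  by (intro bij_betw_byWitness[where f' = partition_of_word])
    (auto simp: word_of_partition_of_word partition_of_word_of_partition H_def)

fun recode :: "nat \<Rightarrow> nat \<Rightarrow> bool list \<Rightarrow> bool list" where
  "recode m c [] = []"
| "recode m c (a # w) = (a \<noteq> (m dvd c)) # recode m (if a then c else Suc c) w"

fun unrecode :: "nat \<Rightarrow> nat \<Rightarrow> bool list \<Rightarrow> bool list" where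
  "unrecode m c [] = []"
| "unrecode m c (b # v) = (b \<noteq> (m dvd c)) # unrecode m (if b \<noteq> (m dvd c) then c else Suc c) v"

lemma recode_unrecode: "recode m c (unrecode m c v) = v"
  by (induction m c v rule: unrecode.induct) auto

lemma unrecode_recode: "unrecode m c (recode m c w) = w"
  by (induction m c w rule: recode.induct) auto

lemma length_unrecode: "length (unrecode m c v) = length v"
  by (induction m c v rule: unrecode.induct) auto

lemma length_recode: "length (recode m c w) = length w"
  by (induction m c w rule: recode.induct) auto

lemma bij_betw_unrecode: "bij_betw (unrecode m c) {w. P (length w)} {w. P (length w)}"
  by (rule bij_betw_byWitness[where f' = "recode m c"])
    (auto simp: recode_unrecode unrecode_recode length_recode length_unrecode)

lemma dif_conv_filter:
  "dif d xs = length (filter (\<lambda>(a, b). int a - int b < int d) (zip xs (tl xs)))"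
  unfolding dif_def length_filter_conv_card by (rule arg_cong[where f = card]) (auto simp: nth_tl)

lemma dif_snoc:
  "xs \<noteq> [] \<Longrightarrow> dif d (xs @ [x]) = dif d xs + (if int (last xs) - int x < int d then 1 else 0)"
  by (induction xs rule: induct_list012) (auto simp: dif_conv_filter)

lemma modp_conv_filter: "modp d xs = length (filter (\<lambda>x. x mod Suc d \<noteq> 1 mod Suc d) xs)"
  unfolding modp_def length_filter_conv_card by simp

text \<open>The state \<open>g\<close> is the number of False letters read since the last True,
  or \<open>None\<close> before the first True.\<close>

fun word_dif :: "nat \<Rightarrow> nat option \<Rightarrow> bool list \<Rightarrow> nat" where
  "word_dif d g [] = 0"
| "word_dif d g (False # w) = word_dif d (map_option Suc g) w"
| "word_dif d g (True # w) = (if \<exists>r<d. g = Some r then 1 else 0) + word_dif d (Some 0) w"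

lemma dif_parts_snoc: "dif d (parts (c + r) w @ [Suc c]) = word_dif d (Some r) w"
proof (induction w arbitrary: c r)
  case (Cons a w)
  show ?case
  proof (cases a)
    case True
    have "dif d (parts (c + r) w @ [Suc (c + r), Suc c])
        = dif d (parts (c + r) w @ [Suc (c + r)]) + (if r < d then 1 else 0)"
      using dif_snoc[of "parts (c + r) w @ [Suc (c + r)]" d "Suc c"] by simp
    also have "dif d (parts (c + r) w @ [Suc (c + r)]) = word_dif d (Some 0) w"
      using Cons.IH[of "c + r" 0] by simp
    finally show ?thesis
      using True by simp
  next
    case False
    then show ?thesis
      using Cons.IH[of c "Suc r"] by simp
  qed
qed (simp add: dif_conv_filter)

lemma dif_parts: "dif d (parts c w) = word_dif d None w"
proof (induction c w rule: parts.induct)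
  case (3 c w)
  then show ?case
    using dif_parts_snoc[of d c 0 w] by simp
qed (simp_all add: dif_conv_filter)

lemma modp_snoc_Suc: "modp d (xs @ [Suc c]) = modp d xs + (if Suc d dvd c then 0 else 1)"
proof -
  have "Suc c mod Suc d = 1 mod Suc d \<longleftrightarrow> Suc d dvd c"
    by (auto simp: mod_Suc dvd_eq_mod_eq_0 split: if_splits)
  then show ?thesis
    by (simp add: modp_conv_filter)
qed

lemma Suc_mod_not_dvd: "\<not> m dvd Suc c \<Longrightarrow> Suc c mod m = Suc (c mod m)"
  by (metis dvd_eq_mod_eq_0 mod_Suc)

lemma modp_singleton_Suc: "modp d [Suc c] = (if Suc d dvd c then 0 else 1)"
  using modp_snoc_Suc[of d "[]" c] by (simp add: modp_def)

lemma less_mod_SucD: "r < c mod Suc d \<Longrightarrow> r < d"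
  using mod_less_divisor[of "Suc d" c] by linarith

lemma modp_parts_le_word_dif_recode:
  assumes "\<not> Suc d dvd c \<Longrightarrow> \<exists>r < c mod Suc d. g = Some r"
  shows "modp d (parts c (w @ [True])) \<le> word_dif d g (recode (Suc d) c w @ [True])"
  using assms
proof (induction w arbitrary: c g)
  case Nil
  then show ?case
    by (auto simp: modp_singleton_Suc dvd_eq_mod_eq_0 dest: less_mod_SucD)
next
  case (Cons a w)
  let ?m = "modp d (parts c (w @ [True]))" and ?v = "recode (Suc d) c w @ [True]"
  let ?m' = "modp d (parts (Suc c) (w @ [True]))" and ?v' = "recode (Suc d) (Suc c) w @ [True]"
  consider "a" "Suc d dvd c" | "a" "\<not> Suc d dvd c" | "\<not> a" "Suc d dvd c" | "\<not> a" "\<not> Suc d dvd c"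
    by blast
  then show ?case
  proof cases
    case 1
    then have "?m \<le> word_dif d (map_option Suc g) ?v"
      by (intro Cons.IH) simp
    with 1 show ?thesis
      by (simp add: modp_snoc_Suc)
  next
    case 2
    then obtain r where "r < c mod Suc d" "g = Some r"
      using Cons.prems by blast
    moreover have "?m \<le> word_dif d (Some 0) ?v"
      using 2 by (intro Cons.IH) (auto simp: dvd_eq_mod_eq_0)
    ultimately show ?thesis
      using 2 by (auto simp: modp_snoc_Suc dest: less_mod_SucD)
  next
    case 3
    then have "?m' \<le> word_dif d (Some 0) ?v'"
      by (intro Cons.IH) (auto simp: dvd_eq_mod_eq_0)
    with 3 show ?thesis
      by simp
  next
    case 4
    then obtain r where "r < c mod Suc d" "g = Some r"
      using Cons.prems by blast
    then have "?m' \<le> word_dif d (Some (Suc r)) ?v'"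
      by (intro Cons.IH) (auto simp: Suc_mod_not_dvd)
    with 4 \<open>g = Some r\<close> show ?thesis
      by simp
  qed
qed

lemma word_dif_recode_eq_0:
  assumes "modp d (parts c (w @ [True])) = 0"
    and "\<And>r. g = Some r \<Longrightarrow> c mod Suc d \<le> Suc r"
    and "\<And>r. g = Some r \<Longrightarrow> Suc d dvd c \<Longrightarrow> d \<le> r"
  shows "word_dif d g (recode (Suc d) c w @ [True]) = 0"
  using assms
proof (induction w arbitrary: c g)
  case Nil
  have "Suc d dvd c"
    using Nil.prems(1) by (simp add: modp_singleton_Suc split: if_splits)
  with Nil.prems(3) show ?case
    by force
next
  case (Cons a w)
  show ?case
  proof (cases a)
    case True
    then have "Suc d dvd c" "modp d (parts c (w @ [True])) = 0"
      using Cons.prems(1) by (simp_all add: modp_snoc_Suc split: if_splits)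
    then have "word_dif d (map_option Suc g) (recode (Suc d) c w @ [True]) = 0"
      using Cons.prems(3) by (intro Cons.IH) (force simp: dvd_eq_mod_eq_0)+
    with True \<open>Suc d dvd c\<close> show ?thesis
      by simp
  next
    case False
    then have "modp d (parts (Suc c) (w @ [True])) = 0"
      using Cons.prems(1) by simp
    then have "word_dif d (if Suc d dvd c then Some 0 else map_option Suc g)
        (recode (Suc d) (Suc c) w @ [True]) = 0"
      using Cons.prems(2,3) by (intro Cons.IH) (auto simp: mod_Suc dvd_eq_mod_eq_0 split: if_splits)
    with False Cons.prems(3) show ?thesis
      by (auto split: if_splits)
  qed
qed

lemma modp_le_dif_recode:
  "modp d (partition_of_word w) \<le> dif d (partition_of_word (recode (Suc d) 0 w))"
  using modp_parts_le_word_dif_recode[of d 0 None w]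
  by (simp add: partition_of_word_def dif_parts)

lemma dif_recode_eq_0:
  "modp d (partition_of_word w) = 0 \<Longrightarrow> dif d (partition_of_word (recode (Suc d) 0 w)) = 0"
  using word_dif_recode_eq_0[of d 0 w None]
  by (simp add: partition_of_word_def dif_parts)

theorem theorem3p6:
  fixes d n :: nat
  assumes "d \<ge> 1" and "n \<ge> 1"
  shows "\<exists>\<phi>. bij_betw \<phi> (H n) (H n) \<and>
           (\<forall>p\<in>H n. dif d p \<ge> modp d (\<phi> p)) \<and>
           (\<forall>p\<in>H n. dif d p = 0 \<longleftrightarrow> modp d (\<phi> p) = 0)"
proof -
  define \<phi> where "\<phi> = partition_of_word \<circ> unrecode (Suc d) 0 \<circ> word_of_partition"
  have "bij_betw \<phi> (H n) (H n)"
    unfolding \<phi>_def comp_assoc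
    by (rule bij_betw_trans[OF bij_betw_trans[OF bij_betw_word_of_partition
          bij_betw_unrecode[where P = "\<lambda>l. Suc l = n"]] bij_betw_partition_of_word])
  moreover have "modp d (\<phi> p) \<le> dif d p \<and> (dif d p = 0 \<longleftrightarrow> modp d (\<phi> p) = 0)"
    if "p \<in> H n" for p
  proof -
    define w where "w = unrecode (Suc d) 0 (word_of_partition p)"
    have "p = partition_of_word (recode (Suc d) 0 w)"
      using that by (simp add: w_def recode_unrecode partition_of_word_of_partition H_def)
    moreover have "\<phi> p = partition_of_word w"
      by (simp add: \<phi>_def w_def)
    ultimately show ?thesis
      using modp_le_dif_recode[of d w] dif_recode_eq_0[of d w] by auto
  qed
  ultimately show ?thesis
    by blast
qed

end
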